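(* Let $E$ be an imaginary quadratic field with $\mathrm{Emb}(\mathfrak{o}_E,\mathcal{O})\neq\emptyset$ and $\Delta_E\equiv 1\pmod 4$, and let $a_1,\dots,a_{h_E}$ be as in the context. Then $\varphi(\mathcal{T}(a_j))\equiv 1\pmod 2$ for every $1\le j\le h_E$, and \[\sum_{j=1}^{h_E}\varphi(\mathcal{T}(a_j))\equiv h_E\pmod 2.\]
   Context: $D$ is the $\mathbb{Q}$-algebra with basis $1,i,j,ij$, $i^2=j^2=-1$, $ij=-ji$ (definite, discriminant $2$), with reduced norm $\mathrm{Nm}$ and trace $\mathrm{Tr}$; $\mathcal{O}=\mathbb{Z}+\mathbb{Z}i+\mathbb{Z}j+\mathbb{Z}w$, $w=(1+i+j+ij)/2$ (Hurwitz order, class number one). $G=D^\times/\mathbb{Q}^\times$, $K_p$ image of $\mathcal{O}_p^\times$ in $G_p$, $K_f=\prod_pK_p$, $\Gamma$ image of $\mathcal{O}^\times$. $V_D$ = trace-zero elements, $L(\mathcal{O})=\{x\in\mathbb{Z}+2\mathcal{O}:\mathrm{Tr}x=0\}$, with $\mathbb{Z}$-basis $\mathbf b_1=-i+j+ij$, $\mathbf b_2=i-j+ij$, $\mathbf b_3=i+j-ij$; $\mathcal{T}(a_1\mathbf b_1+a_2\mathbf b_2+a_3\mathbf b_3)=(a_1,a_2,a_3)$. $\varphi(x)=x_1^3+x_2^3+x_3^3-x_1^2x_2-x_1^2x_3-x_2^2x_1-x_2^2x_3-x_3^2x_1-x_3^2x_2+2x_1x_2x_3$. $\mathrm{Emb}(\mathfrak{o}_E,\mathcal{O})$: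 embeddings $\iota:E\hookrightarrow D$ with $\iota(E)\cap\mathcal{O}\cong\mathfrak{o}_E$; $G$ acts by conjugation $(g\cdot\iota)(x)=g\iota(x)g^{-1}$. Fix $\iota_0\in\mathrm{Emb}(\mathfrak{o}_E,\mathcal{O})$, torus $T(R)=(\iota_0(E)\otimes R)^\times/R^\times$, $U=T(\mathbb{R})\prod_p\overline{\iota_0(\mathfrak{o}_{E,p}^\times)}$; $h_E=\#T(\mathbb{Q})\backslash T(\mathbb{A})/U$ is the class number. Choose $b_j\in T(\mathbb{A}_f)$ ($1\le j\le h_E$) with $T(\mathbb{A})=\bigsqcup_jT(\mathbb{Q})b_jU$ and write $b_j=\gamma_j(\gamma_j)_\infty^{-1}k_j$ with $\gamma_j\in G$, $\gamma_j^{-1}\cdot\iota_0\in\mathrm{Emb}(\mathfrak{o}_E,\mathcal{O})$, $k_j\in K_f$. Let $a_0\in\iota_0(E)\cap V_D$ with $\mathrm{Nm}(a_0)=-\Delta_E$ and $a_j=\gamma_j^{-1}a_0\gamma_j$; then $a_j\in L(\mathcal{O})$ and $\mathrm{Nm}(a_j)=-\Delta_E$. *)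

theory Defs
  imports Complex_Main "HOL-Computational_Algebra.Squarefree" "HOL-Number_Theory.Cong"
begin

text \<open>The definite quaternion algebra D over Q of discriminant 2, with basis 1, i, j, ij,
  i^2 = j^2 = -1, ij = -ji.  An element is stored by its coordinates w.r.t. 1, i, j, ij.\<close>

datatype quat = Quat (re: rat) (ci: rat) (cj: rat) (ck: rat)

definition qadd :: "quat \<Rightarrow> quat \<Rightarrow> quat" where
  "qadd x y = Quat (re x + re y) (ci x + ci y) (cj x + cj y) (ck x + ck y)"

definition qsmult :: "rat \<Rightarrow> quat \<Rightarrow> quat" where
  "qsmult c x = Quat (c * re x) (c * ci x) (c * cj x) (c * ck x)"

definition qmult :: "quat \<Rightarrow> quat \<Rightarrow> quat" where
  "qmult x y = Quat
     (re x * re y - ci x * ci y - cj x * cj y - ck x * ck y)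
     (re x * ci y + ci x * re y + cj x * ck y - ck x * cj y)
     (re x * cj y - ci x * ck y + cj x * re y + ck x * ci y)
     (re x * ck y + ci x * cj y - cj x * ci y + ck x * re y)"

definition qof_int :: "int \<Rightarrow> quat" where
  "qof_int n = Quat (of_int n) 0 0 0"

definition Nm :: "quat \<Rightarrow> rat" where
  "Nm x = (re x)^2 + (ci x)^2 + (cj x)^2 + (ck x)^2"

definition Tr :: "quat \<Rightarrow> rat" where
  "Tr x = 2 * re x"

definition hurwitz :: "quat set" where
  "hurwitz = {qadd (qadd (qof_int a) (qsmult (of_int b) (Quat 0 1 0 0)))
                   (qadd (qsmult (of_int c) (Quat 0 0 1 0))
                         (qsmult (of_int d) (Quat (1/2) (1/2) (1/2) (1/2)))) | a b c d. True}"

definition L_O :: "quat set" where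
  "L_O = {x. (\<exists>n y. y \<in> hurwitz \<and> x = qadd (qof_int n) (qsmult 2 y)) \<and> Tr x = 0}"

definition bb1 :: quat where "bb1 = Quat 0 (-1) 1 1"
definition bb2 :: quat where "bb2 = Quat 0 1 (-1) 1"
definition bb3 :: quat where "bb3 = Quat 0 1 1 (-1)"

definition Tcoord :: "quat \<Rightarrow> int \<times> int \<times> int" where
  "Tcoord x = (THE t. x = qadd (qadd (qsmult (of_int (fst t)) bb1)
                                      (qsmult (of_int (fst (snd t))) bb2))
                                (qsmult (of_int (snd (snd t))) bb3))"

definition phi :: "int \<times> int \<times> int \<Rightarrow> int" where
  "phi t = (case t of (x1, x2, x3) \<Rightarrow>
     x1^3 + x2^3 + x3^3 - x1^2*x2 - x1^2*x3 - x2^2*x1 - x2^2*x3 - x3^2*x1 - x3^2*x2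
     + 2*x1*x2*x3)"

end

theory Submission
  imports Defs
begin

text \<open>Writing \<open>x = a\<^sub>1 b\<^sub>1 + a\<^sub>2 b\<^sub>2 + a\<^sub>3 b\<^sub>3\<close>, the coordinates of \<open>x\<close> with respect to
  \<open>i, j, ij\<close> are \<open>s - 2a\<^sub>1, s - 2a\<^sub>2, s - 2a\<^sub>3\<close> with \<open>s = a\<^sub>1 + a\<^sub>2 + a\<^sub>3\<close>, so
  \<open>Nm x \<equiv> 3s \<equiv> s (mod 2)\<close>.  On the other hand \<open>\<phi>(a) \<equiv> s (mod 2)\<close>, because
  \<open>t\<^sup>3 \<equiv> t\<close> and the mixed terms pair up to \<open>a\<^sub>ia\<^sub>k(a\<^sub>i + a\<^sub>k)\<close>, which is even.  Hence
  \<open>Nm x = -\<Delta>\<close> odd forces \<open>\<phi>(\<T>(x))\<close> to be odd, and a sum of \<open>h\<close> odd numbers is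
  congruent to \<open>h\<close>.\<close>

definition bb_comb :: "int \<Rightarrow> int \<Rightarrow> int \<Rightarrow> quat" where
  "bb_comb a1 a2 a3 =
     qadd (qadd (qsmult (of_int a1) bb1) (qsmult (of_int a2) bb2)) (qsmult (of_int a3) bb3)"

lemma bb_comb_eq:
  "bb_comb a1 a2 a3 =
     Quat 0 (of_int (- a1 + a2 + a3)) (of_int (a1 - a2 + a3)) (of_int (a1 + a2 - a3))"
  by (simp add: bb_comb_def qadd_def qsmult_def bb1_def bb2_def bb3_def algebra_simps)

lemma bb_comb_inject: "bb_comb a1 a2 a3 = bb_comb b1 b2 b3 \<longleftrightarrow> (a1, a2, a3) = (b1, b2, b3)"
proof
  assume "bb_comb a1 a2 a3 = bb_comb b1 b2 b3"
  then have "- a1 + a2 + a3 = - b1 + b2 + b3" "a1 - a2 + a3 = b1 - b2 + b3"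
    "a1 + a2 - a3 = b1 + b2 - b3"
    unfolding bb_comb_eq by (simp_all only: quat.inject of_int_eq_iff)
  then show "(a1, a2, a3) = (b1, b2, b3)" by simp
qed simp

lemma Tcoord_bb_comb: "Tcoord (bb_comb a1 a2 a3) = (a1, a2, a3)"
  unfolding Tcoord_def bb_comb_def[symmetric]
  by (rule the_equality) (auto simp: bb_comb_inject)

lemma L_O_imp_bb_comb:
  assumes "x \<in> L_O"
  obtains a1 a2 a3 where "x = bb_comb a1 a2 a3"
proof -
  obtain n y where y: "y \<in> hurwitz" "x = qadd (qof_int n) (qsmult 2 y)" and tr: "Tr x = 0"
    using assms unfolding L_O_def by blast
  obtain a b c d where
    "y = qadd (qadd (qof_int a) (qsmult (of_int b) (Quat 0 1 0 0)))
           (qadd (qsmult (of_int c) (Quat 0 0 1 0))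
                 (qsmult (of_int d) (Quat (1/2) (1/2) (1/2) (1/2))))"
    using y(1) unfolding hurwitz_def by blast
  with y(2) tr have "x = bb_comb (c + d) (b + d) (b + c + d)"
    by (simp add: bb_comb_eq Tr_def qadd_def qsmult_def qof_int_def algebra_simps)
  then show thesis by (rule that)
qed

lemma Nm_bb_comb:
  "Nm (bb_comb a1 a2 a3) =
     of_int ((- a1 + a2 + a3)\<^sup>2 + (a1 - a2 + a3)\<^sup>2 + (a1 + a2 - a3)\<^sup>2)"
  by (simp add: bb_comb_eq Nm_def)

lemma even_sum_squares_iff:
  fixes a1 a2 a3 :: int
  shows "even ((- a1 + a2 + a3)\<^sup>2 + (a1 - a2 + a3)\<^sup>2 + (a1 + a2 - a3)\<^sup>2)
           \<longleftrightarrow> even (a1 + a2 + a3)"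
  by auto

lemma even_phi_iff: "even (phi (a1, a2, a3)) \<longleftrightarrow> even (a1 + a2 + a3)"
  by (auto simp: phi_def)

lemma odd_phi_Tcoord:
  assumes "x \<in> L_O" and "Nm x = - of_int D" and "odd D"
  shows "odd (phi (Tcoord x))"
proof -
  obtain a1 a2 a3 where x: "x = bb_comb a1 a2 a3"
    using assms(1) by (rule L_O_imp_bb_comb)
  have "(- a1 + a2 + a3)\<^sup>2 + (a1 - a2 + a3)\<^sup>2 + (a1 + a2 - a3)\<^sup>2 = - D"
    using assms(2) unfolding x Nm_bb_comb by (simp only: of_int_minus[symmetric] of_int_eq_iff)
  with assms(3) have "odd ((- a1 + a2 + a3)\<^sup>2 + (a1 - a2 + a3)\<^sup>2 + (a1 + a2 - a3)\<^sup>2)"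
    by (metis even_minus)
  then have "odd (a1 + a2 + a3)"
    using even_sum_squares_iff by blast
  then show ?thesis
    unfolding x Tcoord_bb_comb even_phi_iff .
qed

theorem lemma5p1:
  fixes \<Delta> :: int and h :: nat and a :: "nat \<Rightarrow> quat"
  assumes disc_neg: "\<Delta> < 0"
    and disc_sqfree: "squarefree \<Delta>"
    and disc_mod4: "\<Delta> mod 4 = 1"
    and h_pos: "h \<ge> 1"
    and a_L: "\<forall>j\<in>{1..h}. a j \<in> L_O"
    and a_Nm: "\<forall>j\<in>{1..h}. Nm (a j) = - of_int \<Delta>"
  shows "(\<forall>j\<in>{1..h}. [phi (Tcoord (a j)) = 1] (mod 2))
         \<and> [(\<Sum>j=1..h. phi (Tcoord (a j))) = int h] (mod 2)"
proof -
  have "odd \<Delta>"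
    using disc_mod4 by presburger
  then have phi_odd: "[phi (Tcoord (a j)) = 1] (mod 2)" if "j \<in> {1..h}" for j
    using odd_phi_Tcoord a_L a_Nm that by (simp add: cong_def odd_iff_mod_2_eq_one)
  then have "[(\<Sum>j=1..h. phi (Tcoord (a j))) = (\<Sum>j=1..h. 1)] (mod 2)"
    by (rule cong_sum)
  with phi_odd show ?thesis
    by simp
qed

end
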